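(* In the standing setting, let $(A,B,R,\sigma)$ be a context with associated Boolean relation $R^B$. For all $X\subseteq B$ and $Y\subseteq A$, $$(\chi_X)^{\uparrow_N}=\chi_{X^{\uparrow_N}}\qquad\text{and}\qquad (\chi_Y)^{\downarrow^N}=\chi_{Y^{\downarrow^N}},$$ where on the left the fuzzy necessity operators are applied and on the right the crisp ones.
   Context: Adjoint triple: for posets $(P_1,\le_1),(P_2,\le_2),(P_3,\le_3)$, maps $\&\colon P_1\times P_2\to P_3$, $\swarrow\colon P_3\times P_2\to P_1$, $\nwarrow\colon P_3\times P_1\to P_2$ with $x\le_1 z\swarrow y \iff x\,\&\,y\le_3 z \iff y\le_2 z\nwarrow x$ for all $x,y,z$. For lower-bounded posets, $\&$ has zero-divisors if there are $x\ne\bot_1$, $y\neq\bot_2$ with $x\,\&\,y=\bot_3$. Standing setting: $(L_1,\preceq_1,\bot_1,\top_1)$ and $(L_2,\preceq_2,\bot_2,\top_2)$ are complete lattices and $(P,\le,\bot,\top)$ is a bounded poset. A multi-adjoint frame consists of adjoint triples $(\&_i,\swarrow^i,\nwarrow_i)$, $i=1,\dots,n$, with respect to $L_1,L_2,P$; a property-oriented frame consists of adjoint triples $(\&^p_j,\swarrow_p^j,\nwarrow^p_j)$, $j=1,\dots,m$, with respect to $P,L_2,L_1$; an object-oriented frame consists of adjoint triples $(\&^o_k,\swarrow_o^k,\nwarrow^o_k)$, $k=1,\dots,s$, with respect to $L_1,P,L_2$. All conjunctors $\&_i,\&^p_j,\&^o_k$ have no zero-divisors. A context $(A,B,R,\sigma)$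 consists of non-empty sets $A,B$, $R\colon A\times B\to P$, and maps $\sigma,\sigma_p,\sigma_o$ from $A\times B$ to the index sets of the three frames. Fuzzy necessity operators: $g^{\uparrow_N}(a)=\inf\{g(b)\swarrow_o^{\sigma_o(a,b)}R(a,b)\mid b\in B\}$ for $g\in L_2^B$, and $f^{\downarrow^N}(b)=\inf\{f(a)\nwarrow^p_{\sigma_p(a,b)}R(a,b)\mid a\in A\}$ for $f\in L_1^A$. Associated Boolean context $(A,B,R^B)$: $R^B(a,b)=1$ if $R(a,b)\ne\bot$ and $0$ otherwise. Crisp necessity operators: for $X\subseteq B$, $X^{\uparrow_N}=\{a\in A\mid \forall b\in B,\ R^B(a,b)=1\Rightarrow b\in X\}$; for $Y\subseteq A$, $Y^{\downarrow^N}=\{b\in B\mid\forall a\in A,\ R^B(a,b)=1\Rightarrow a\in Y\}$. For $X\subseteq B$, $\chi_X\in L_2^B$ takes value $\top_2$ on $X$ and $\bot_2$ elsewhere; for $Y\subseteq A$, $\chi_Y\in L_1^A$ takes value $\top_1$ on $Y$ and $\bot_1$ elsewhere. *)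

theory Defs
  imports Main
begin

definition adjoint_triple ::
  "('x::order \<Rightarrow> 'y::order \<Rightarrow> 'z::order) \<Rightarrow> ('z \<Rightarrow> 'y \<Rightarrow> 'x) \<Rightarrow> ('z \<Rightarrow> 'x \<Rightarrow> 'y) \<Rightarrow> bool" where
  "adjoint_triple cj sw nw \<longleftrightarrow>
     (\<forall>x y z. (x \<le> sw z y \<longleftrightarrow> cj x y \<le> z) \<and> (cj x y \<le> z \<longleftrightarrow> y \<le> nw z x))"

definition no_zero_div ::
  "('x::bot \<Rightarrow> 'y::bot \<Rightarrow> 'z::bot) \<Rightarrow> bool" where
  "no_zero_div cj \<longleftrightarrow> (\<forall>x y. x \<noteq> bot \<and> y \<noteq> bot \<longrightarrow> cj x y \<noteq> bot)"

text \<open>A = UNIV of type 'a, B = UNIV of type 'b.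
  swo k: implication of the k-th object-oriented triple (L2 x P -> L1);
  nwp j: implication of the j-th property-oriented triple (L1 x P -> L2).\<close>
definition fuzzy_up_N ::
  "('k \<Rightarrow> 'l2 \<Rightarrow> 'p \<Rightarrow> 'l1::complete_lattice) \<Rightarrow> ('a \<Rightarrow> 'b \<Rightarrow> 'k) \<Rightarrow> ('a \<Rightarrow> 'b \<Rightarrow> 'p)
     \<Rightarrow> ('b \<Rightarrow> 'l2) \<Rightarrow> ('a \<Rightarrow> 'l1)" where
  "fuzzy_up_N swo \<sigma>o R g = (\<lambda>a. INF b. swo (\<sigma>o a b) (g b) (R a b))"

definition fuzzy_down_N ::
  "('j \<Rightarrow> 'l1 \<Rightarrow> 'p \<Rightarrow> 'l2::complete_lattice) \<Rightarrow> ('a \<Rightarrow> 'b \<Rightarrow> 'j) \<Rightarrow> ('a \<Rightarrow> 'b \<Rightarrow> 'p)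
     \<Rightarrow> ('a \<Rightarrow> 'l1) \<Rightarrow> ('b \<Rightarrow> 'l2)" where
  "fuzzy_down_N nwp \<sigma>p R f = (\<lambda>b. INF a. nwp (\<sigma>p a b) (f a) (R a b))"

text \<open>Associated Boolean relation (true = 1, false = 0).\<close>
definition boolean_rel :: "('a \<Rightarrow> 'b \<Rightarrow> 'p::bot) \<Rightarrow> 'a \<Rightarrow> 'b \<Rightarrow> bool" where
  "boolean_rel R a b \<longleftrightarrow> R a b \<noteq> bot"

definition crisp_up_N :: "('a \<Rightarrow> 'b \<Rightarrow> bool) \<Rightarrow> 'b set \<Rightarrow> 'a set" where
  "crisp_up_N RB X = {a. \<forall>b. RB a b \<longrightarrow> b \<in> X}"

definition crisp_down_N :: "('a \<Rightarrow> 'b \<Rightarrow> bool) \<Rightarrow> 'a set \<Rightarrow> 'b set" where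
  "crisp_down_N RB Y = {b. \<forall>a. RB a b \<longrightarrow> a \<in> Y}"

definition chi :: "'x set \<Rightarrow> 'x \<Rightarrow> 'l::{bot,top}" where
  "chi X = (\<lambda>x. if x \<in> X then top else bot)"

end

theory Submission
  imports Defs
begin

text \<open>With crisp arguments every implication of an adjoint triple is crisp: its consequent is
  either \<open>\<top>\<close>, giving \<open>\<top>\<close>, or \<open>\<bottom>\<close>, giving \<open>\<top>\<close> exactly when the antecedent is \<open>\<bottom>\<close>,
  because the conjunctor has no zero-divisors. Hence the fuzzy necessity operator applied to
  a characteristic function is an infimum of \<open>\<top>\<close>'s and \<open>\<bottom>\<close>'s, which is \<open>\<bottom>\<close> precisely when
  some object related to \<open>a\<close> in the Boolean context lies outside the crisp set.\<close>

lemma adjoint_triple_sw_top: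
  assumes "adjoint_triple cj sw nw"
  shows "sw (top::'z::order_top) y = (top::'x::order_top)"
  using assms unfolding adjoint_triple_def by (metis top.extremum top.extremum_uniqueI)

lemma adjoint_triple_nw_top:
  assumes "adjoint_triple cj sw nw"
  shows "nw (top::'z::order_top) x = (top::'y::order_top)"
  using assms unfolding adjoint_triple_def by (metis top.extremum top.extremum_uniqueI)

lemma adjoint_triple_sw_bot:
  fixes cj :: "'x::{order_bot,order_top} \<Rightarrow> 'y::order_bot \<Rightarrow> 'z::order_bot"
  assumes adj: "adjoint_triple cj sw nw" and nzd: "no_zero_div cj"
  shows "sw bot y = (if y = bot then top else bot)"
proof -
  have le_iff: "x \<le> sw bot y \<longleftrightarrow> cj x y = bot" for x
    using adj unfolding adjoint_triple_def by (simp add: bot_unique)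
  have cj_bot_right: "cj x bot = bot" for x
    using adj unfolding adjoint_triple_def by (metis bot.extremum bot_unique)
  show ?thesis
  proof (cases "y = bot")
    case True
    then show ?thesis using le_iff cj_bot_right by (metis top_unique)
  next
    case False
    then have "cj (sw bot y) y = bot" using le_iff by blast
    then show ?thesis using False nzd unfolding no_zero_div_def by auto
  qed
qed

lemma adjoint_triple_nw_bot:
  fixes cj :: "'x::order_bot \<Rightarrow> 'y::{order_bot,order_top} \<Rightarrow> 'z::order_bot"
  assumes adj: "adjoint_triple cj sw nw" and nzd: "no_zero_div cj"
  shows "nw bot x = (if x = bot then top else bot)"
proof -
  have le_iff: "y \<le> nw bot x \<longleftrightarrow> cj x y = bot" for y
    using adj unfolding adjoint_triple_def by (metis bot_unique)
  have cj_bot_left: "cj bot y = bot" for y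
    using adj unfolding adjoint_triple_def by (metis bot.extremum bot_unique)
  show ?thesis
  proof (cases "x = bot")
    case True
    then show ?thesis using le_iff cj_bot_left by (metis top_unique)
  next
    case False
    then have "cj x (nw bot x) = bot" using le_iff by blast
    then show ?thesis using False nzd unfolding no_zero_div_def by auto
  qed
qed

lemma INF_chi: "(INF x. chi S x) = (if S = UNIV then top else (bot::'l::complete_lattice))"
proof (cases "S = UNIV")
  case False
  then obtain x where "x \<notin> S" by blast
  then have "(INF x. chi S x) \<le> (bot::'l)"
    using INF_lower[OF UNIV_I, of "chi S" x] by (simp add: chi_def)
  then show ?thesis using False by (simp add: bot_unique)
qed (simp add: chi_def)

lemma fuzzy_up_N_chi:
  fixes R :: "'a \<Rightarrow> 'b \<Rightarrow> 'p::{order_bot,order_top}"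
    and cjo :: "'k \<Rightarrow> 'l1::complete_lattice \<Rightarrow> 'p \<Rightarrow> 'l2::complete_lattice"
  assumes adj: "\<And>k. adjoint_triple (cjo k) (swo k) (nwo k)"
    and nzd: "\<And>k. no_zero_div (cjo k)"
  shows "fuzzy_up_N swo \<sigma>o R (chi X) = chi (crisp_up_N (boolean_rel R) X)"
proof
  fix a
  have crisp: "swo (\<sigma>o a b) (chi X b) (R a b) = chi {b. boolean_rel R a b \<longrightarrow> b \<in> X} b" for b
    using adjoint_triple_sw_top[OF adj] adjoint_triple_sw_bot[OF adj nzd]
    by (simp add: chi_def boolean_rel_def)
  show "fuzzy_up_N swo \<sigma>o R (chi X) a = chi (crisp_up_N (boolean_rel R) X) a"
    unfolding fuzzy_up_N_def crisp INF_chi by (simp add: chi_def crisp_up_N_def set_eq_iff)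
qed

lemma fuzzy_down_N_chi:
  fixes R :: "'a \<Rightarrow> 'b \<Rightarrow> 'p::{order_bot,order_top}"
    and cjp :: "'j \<Rightarrow> 'p \<Rightarrow> 'l2::complete_lattice \<Rightarrow> 'l1::complete_lattice"
  assumes adj: "\<And>j. adjoint_triple (cjp j) (swp j) (nwp j)"
    and nzd: "\<And>j. no_zero_div (cjp j)"
  shows "fuzzy_down_N nwp \<sigma>p R (chi Y) = chi (crisp_down_N (boolean_rel R) Y)"
proof
  fix b
  have crisp: "nwp (\<sigma>p a b) (chi Y a) (R a b) = chi {a. boolean_rel R a b \<longrightarrow> a \<in> Y} a" for a
    using adjoint_triple_nw_top[OF adj] adjoint_triple_nw_bot[OF adj nzd]
    by (simp add: chi_def boolean_rel_def)
  show "fuzzy_down_N nwp \<sigma>p R (chi Y) b = chi (crisp_down_N (boolean_rel R) Y) b"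
    unfolding fuzzy_down_N_def crisp INF_chi by (simp add: chi_def crisp_down_N_def set_eq_iff)
qed

theorem mainTheorem3:
  fixes R :: "'a \<Rightarrow> 'b \<Rightarrow> 'p::{order_bot,order_top}"
    and cj :: "'i::finite \<Rightarrow> 'l1::complete_lattice \<Rightarrow> 'l2::complete_lattice \<Rightarrow> 'p"
    and sw :: "'i \<Rightarrow> 'p \<Rightarrow> 'l2 \<Rightarrow> 'l1"
    and nw :: "'i \<Rightarrow> 'p \<Rightarrow> 'l1 \<Rightarrow> 'l2"
    and cjp :: "'j::finite \<Rightarrow> 'p \<Rightarrow> 'l2 \<Rightarrow> 'l1"
    and swp :: "'j \<Rightarrow> 'l1 \<Rightarrow> 'l2 \<Rightarrow> 'p"
    and nwp :: "'j \<Rightarrow> 'l1 \<Rightarrow> 'p \<Rightarrow> 'l2"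
    and cjo :: "'k::finite \<Rightarrow> 'l1 \<Rightarrow> 'p \<Rightarrow> 'l2"
    and swo :: "'k \<Rightarrow> 'l2 \<Rightarrow> 'p \<Rightarrow> 'l1"
    and nwo :: "'k \<Rightarrow> 'l2 \<Rightarrow> 'l1 \<Rightarrow> 'p"
    and \<sigma> :: "'a \<Rightarrow> 'b \<Rightarrow> 'i"
    and \<sigma>p :: "'a \<Rightarrow> 'b \<Rightarrow> 'j"
    and \<sigma>o :: "'a \<Rightarrow> 'b \<Rightarrow> 'k"
    and X :: "'b set" and Y :: "'a set"
  assumes ma: "\<And>i. adjoint_triple (cj i) (sw i) (nw i)"
    and po: "\<And>j. adjoint_triple (cjp j) (swp j) (nwp j)"
    and oo: "\<And>k. adjoint_triple (cjo k) (swo k) (nwo k)"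
    and ma_nzd: "\<And>i. no_zero_div (cj i)"
    and po_nzd: "\<And>j. no_zero_div (cjp j)"
    and oo_nzd: "\<And>k. no_zero_div (cjo k)"
  shows "fuzzy_up_N swo \<sigma>o R (chi X) = chi (crisp_up_N (boolean_rel R) X)
     \<and> fuzzy_down_N nwp \<sigma>p R (chi Y) = chi (crisp_down_N (boolean_rel R) Y)"
  using fuzzy_up_N_chi[where cjo = cjo, OF oo oo_nzd] fuzzy_down_N_chi[where cjp = cjp, OF po po_nzd]
  by blast

end
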